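(* Let $U\subseteq F^d$ be open, $\mathbf x_0\in U$, $f=(f_1,\dots,f_n):U\to F^n$ satisfy (II), (III), (IV) and $\theta:U\to F$ satisfy (VI). Then for every sufficiently small neighbourhood $V\subseteq U$ of $\mathbf x_0$ there exists $M_0>1$ such that $$\inf_{(\mathbf a,a_0)\in F^{n}\times F,\ \|\mathbf a\|\ge M_0}\ \sup_{\mathbf x\in V}|a_0+\mathbf a\cdot f(\mathbf x)+\theta(\mathbf x)|>0.$$
   Context: $F=\mathbb F_q((X^{-1}))$ with $|a|=q^{\deg a}$, sup norm on $F^k$. Difference quotients $\Phi_\beta$ with continuous extensions $\bar\Phi_\beta$ ($\Phi^kg(x_1,\dots,x_{k+1})=\frac{\Phi^{k-1}g(x_1,x_3,\dots)-\Phi^{k-1}g(x_2,x_3,\dots)}{x_1-x_2}$, iterated per variable). (II) $f$ analytic, extends analytically to the boundary of $U$, $f_1(\mathbf x)=x_1$. (III) $1,f_1,\dots,f_n$ restricted to any open subset of $U$ are linearly independent over $F$. (IV) $\|f\|\le1$, $\|\nabla f\|\le1$, $\|\bar\Phi_\beta f(\cdot)\|\le1$ for all $|\beta|=2$. (VI) $\theta$ analytic, extends analytically to the boundary, $|\theta|\le1$, $\|\nabla\theta\|\le1$, $|\bar\Phi_\beta\theta(\cdot)|\le1$ for all $|\beta|=2$. *)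

theory Defs
  imports "HOL-Analysis.Analysis" "HOL-Computational_Algebra.Formal_Laurent_Series"
begin

text \<open>The local field F = F_q((X^{-1})) is modelled as the field of formal Laurent series
  'k fls over a finite field 'k (q = CARD('k)), via the isomorphism X \<mapsto> 1/T.
  Under it, deg a (highest X-exponent) = - fls_subdegree a, so |a| = q^deg a.\<close>

definition absF :: "'k::{field,finite} fls \<Rightarrow> real" where
  "absF a = (if a = 0 then 0 else real CARD('k) powr (- real_of_int (fls_subdegree a)))"

definition normv :: "('k::{field,finite} fls) ^ 'd \<Rightarrow> real" where
  "normv x = Max (range (\<lambda>i. absF (x $ i)))"

definition openF :: "(('k::{field,finite} fls) ^ 'd) set \<Rightarrow> bool" where
  "openF S \<longleftrightarrow> (\<forall>x\<in>S. \<exists>r>0. \<forall>y. normv (y - x) < r \<longrightarrow> y \<in> S)"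

definition closureF :: "(('k::{field,finite} fls) ^ 'd) set \<Rightarrow> (('k fls) ^ 'd) set" where
  "closureF S = {x. \<forall>e>0. \<exists>y\<in>S. normv (y - x) < e}"

definition has_sumF :: "('i \<Rightarrow> 'k::{field,finite} fls) \<Rightarrow> 'k fls \<Rightarrow> bool" where
  "has_sumF c s \<longleftrightarrow> (\<forall>e>0. \<exists>S0. finite S0 \<and>
      (\<forall>S. finite S \<and> S0 \<subseteq> S \<longrightarrow> absF (sum c S - s) < e))"

definition analyticF :: "(('k::{field,finite} fls) ^ 'd) set \<Rightarrow> (('k fls) ^ 'd \<Rightarrow> 'k fls) \<Rightarrow> bool" where
  "analyticF S g \<longleftrightarrow> (\<forall>x0\<in>S. \<exists>r>0. \<exists>c :: ('d \<Rightarrow> nat) \<Rightarrow> 'k fls.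
      \<forall>x. normv (x - x0) < r \<longrightarrow> x \<in> S \<and>
        has_sumF (\<lambda>\<alpha>. c \<alpha> * (\<Prod>i\<in>UNIV. (x $ i - x0 $ i) ^ (\<alpha> i))) (g x))"

definition analytic_to_boundary :: "(('k::{field,finite} fls) ^ 'd) set \<Rightarrow> (('k fls) ^ 'd \<Rightarrow> 'k fls) \<Rightarrow> bool" where
  "analytic_to_boundary U g \<longleftrightarrow> (\<exists>W h. openF W \<and> closureF U \<subseteq> W \<and> analyticF W h \<and>
      (\<forall>x\<in>U. h x = g x))"

definition has_partialF :: "(('k::{field,finite} fls) ^ 'd \<Rightarrow> 'k fls) \<Rightarrow> 'd \<Rightarrow> ('k fls) ^ 'd \<Rightarrow> 'k fls \<Rightarrow> bool" where
  "has_partialF g j x D \<longleftrightarrow> (\<forall>e>0. \<exists>\<delta>>0. \<forall>t. t \<noteq> 0 \<and> absF t < \<delta> \<longrightarrow>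
      absF ((g (x + axis j t) - g x) / t - D) < e)"

fun divdiff :: "('a::field \<Rightarrow> 'a) \<Rightarrow> 'a list \<Rightarrow> 'a" where
  "divdiff g [] = 0"
| "divdiff g [x] = g x"
| "divdiff g (x1 # x2 # xs) = (divdiff g (x1 # xs) - divdiff g (x2 # xs)) / (x1 - x2)"

text \<open>Difference quotient in the i-th variable (the i-th coordinate of the argument is ignored).\<close>
definition dq_var :: "'d \<Rightarrow> 'a::field list \<Rightarrow> ('a ^ 'd \<Rightarrow> 'a) \<Rightarrow> ('a ^ 'd \<Rightarrow> 'a)" where
  "dq_var i xs g = (\<lambda>y. divdiff (\<lambda>t. g (\<chi> k. if k = i then t else y $ k)) xs)"

fun Phi_list :: "'d list \<Rightarrow> ('d \<Rightarrow> 'a::field list) \<Rightarrow> ('a ^ 'd \<Rightarrow> 'a) \<Rightarrow> ('a ^ 'd \<Rightarrow> 'a)" where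
  "Phi_list [] L g = g"
| "Phi_list (i # is) L g = dq_var i (L i) (Phi_list is L g)"

definition var_enum :: "'d::finite list" where
  "var_enum = (SOME xs. distinct xs \<and> set xs = UNIV)"

text \<open>Phi_beta g, evaluated at the family L, where L i is the list of beta i + 1 values
  of the i-th variable (iterated difference quotients, one variable at a time).\<close>
definition PhiF :: "('d::finite \<Rightarrow> nat) \<Rightarrow> ('a::field ^ 'd \<Rightarrow> 'a) \<Rightarrow> ('d \<Rightarrow> 'a list) \<Rightarrow> 'a" where
  "PhiF \<beta> g L = Phi_list var_enum L g 0"

definition dq_dom_bar :: "(('k::{field,finite} fls) ^ 'd) set \<Rightarrow> ('d \<Rightarrow> nat) \<Rightarrow> ('d \<Rightarrow> 'k fls list) set" where
  "dq_dom_bar U \<beta> = {L. (\<forall>i. length (L i) = \<beta> i + 1) \<and> (\<forall>x. (\<forall>i. x $ i \<in> set (L i)) \<longrightarrow> x \<in> U)}"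

definition dq_dom :: "(('k::{field,finite} fls) ^ 'd) set \<Rightarrow> ('d \<Rightarrow> nat) \<Rightarrow> ('d \<Rightarrow> 'k fls list) set" where
  "dq_dom U \<beta> = {L \<in> dq_dom_bar U \<beta>. \<forall>i. distinct (L i)}"

definition dq_bar_bounded :: "(('k::{field,finite} fls) ^ 'd) set \<Rightarrow> ('d \<Rightarrow> nat) \<Rightarrow> (('k fls) ^ 'd \<Rightarrow> 'k fls) \<Rightarrow> bool" where
  "dq_bar_bounded U \<beta> g \<longleftrightarrow> (\<exists>\<Phi>b. (\<forall>L\<in>dq_dom U \<beta>. \<Phi>b L = PhiF \<beta> g L) \<and>
      (\<forall>L\<in>dq_dom_bar U \<beta>. \<forall>e>0. \<exists>\<delta>>0. \<forall>L'\<in>dq_dom_bar U \<beta>.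
          (\<forall>i k. k < length (L i) \<longrightarrow> absF (L i ! k - L' i ! k) < \<delta>) \<longrightarrow> absF (\<Phi>b L - \<Phi>b L') < e) \<and>
      (\<forall>L\<in>dq_dom_bar U \<beta>. absF (\<Phi>b L) \<le> 1))"

end

theory Submission
  imports Defs
begin

text \<open>By (III), the vectors (1, f x) for x in any nonempty open V \<subseteq> U span F^(n+1), so every
  coordinate of a linear form (a0, a) is a fixed linear combination of finitely many values
  a0 + a \<cdot> f x, x \<in> V. By the ultrametric inequality, some such value therefore has absolute
  value at least \<parallel>a\<parallel> / \<Lambda> for a constant \<Lambda> depending only on V. Once \<parallel>a\<parallel> > \<Lambda>, that value
  exceeds 1 \<ge> |\<theta> x|, so adding \<theta> x does not change its absolute value and the supremum
  over V is at least 1.\<close>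

lemma card_field_gt_1: "real CARD('k::{field,finite}) > 1"
proof -
  have "card {0::'k, 1} \<le> CARD('k)" by (intro card_mono) auto
  thus ?thesis by simp
qed

lemma absF_nonneg: "absF (a::'k::{field,finite} fls) \<ge> 0"
  unfolding absF_def by simp

lemma absF_0 [simp]: "absF (0::'k::{field,finite} fls) = 0"
  unfolding absF_def by simp

lemma absF_mult: "absF ((a::'k::{field,finite} fls) * b) = absF a * absF b"
  using card_field_gt_1[where 'k='k] unfolding absF_def by (auto simp: powr_add[symmetric])

lemma absF_uminus [simp]: "absF (- (a::'k::{field,finite} fls)) = absF a"
  unfolding absF_def by simp

lemma absF_add_le: "absF ((a::'k::{field,finite} fls) + b) \<le> max (absF a) (absF b)"
proof (cases "a = 0 \<or> b = 0 \<or> a + b = 0")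
  case True
  thus ?thesis using absF_nonneg[of a] absF_nonneg[of b] by auto
next
  case False
  define q where "q = real CARD('k)"
  have q: "q > 1" unfolding q_def by (rule card_field_gt_1)
  have "min (fls_subdegree a) (fls_subdegree b) \<le> fls_subdegree (a + b)"
    using False fls_plus_subdegree by blast
  hence "q powr - fls_subdegree (a + b) \<le> q powr - min (fls_subdegree a) (fls_subdegree b)"
    using q by (intro powr_mono) auto
  also have "\<dots> = max (q powr - fls_subdegree a) (q powr - fls_subdegree b)"
    using q by (simp add: min_def max_def)
  finally show ?thesis using False unfolding absF_def q_def by simp
qed

lemma absF_add_eq_left:
  assumes "absF (b::'k::{field,finite} fls) < absF a"
  shows "absF (a + b) = absF a"
proof -
  have "absF a \<le> max (absF (a + b)) (absF b)"
    using absF_add_le[of "a + b" "- b"] by simp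
  thus ?thesis using absF_add_le[of a b] assms by linarith
qed

lemma absF_sum_le_Max:
  assumes "finite S" "S \<noteq> {}"
  shows "\<exists>s\<in>S. absF (sum g S :: 'k::{field,finite} fls) \<le> absF (g s)"
  using assms
proof (induction S rule: finite_ne_induct)
  case (insert x S)
  then obtain s where s: "s \<in> S" "absF (sum g S) \<le> absF (g s)" by blast
  have "absF (sum g (insert x S)) \<le> max (absF (g x)) (absF (g s))"
    using absF_add_le[of "g x" "sum g S"] s(2) insert.hyps by auto
  thus ?case using s(1) by (auto simp: max_def split: if_splits)
qed simp

lemma ex_absF_gt: "\<exists>y::'k::{field,finite} fls. absF y > M"
proof -
  obtain m where m: "M < real CARD('k) ^ m" using real_arch_pow[OF card_field_gt_1] by blast
  have "absF ((fls_X_inv :: 'k fls) ^ m) = real CARD('k) ^ m"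
    unfolding absF_def using card_field_gt_1[where 'k='k] by (simp add: powr_realpow)
  thus ?thesis using m by metis
qed

lemma absF_le_normv: "absF (x $ i) \<le> normv x"
  unfolding normv_def by (intro Max_ge) auto

lemma normv_attained: obtains i where "normv x = absF (x $ i)"
proof -
  have "normv x \<in> range (\<lambda>i. absF (x $ i))" unfolding normv_def by (intro Max_in) auto
  thus ?thesis using that by auto
qed

lemma normv_nonneg: "normv x \<ge> 0"
  using absF_le_normv[of x] absF_nonneg order_trans by blast

definition dotv :: "'a::field ^ 'm \<Rightarrow> 'a ^ 'm \<Rightarrow> 'a" where
  "dotv w v = (\<Sum>i\<in>UNIV. w $ i * v $ i)"

lemma dotv_axis: "dotv w (axis j 1) = w $ j"
proof -
  have "dotv w (axis j 1) = (\<Sum>i\<in>UNIV. if i = j then w $ i else 0)"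
    unfolding dotv_def by (intro sum.cong) (auto simp: axis_def)
  thus ?thesis by simp
qed

lemma dotv_sum_scale: "dotv w (\<Sum>a\<in>T. r a *s a) = (\<Sum>a\<in>T. r a * dotv w a)"
proof -
  have "dotv w (\<Sum>a\<in>T. r a *s a) = (\<Sum>i\<in>UNIV. \<Sum>a\<in>T. r a * (w $ i * a $ i))"
    unfolding dotv_def by (simp add: sum_component sum_distrib_left algebra_simps)
  also have "\<dots> = (\<Sum>a\<in>T. r a * dotv w a)"
    unfolding dotv_def sum_distrib_left by (rule sum.swap)
  finally show ?thesis .
qed

lemma dotv_option:
  "dotv w v = w $ None * v $ None + (\<Sum>i\<in>UNIV. w $ Some i * v $ Some i)"
proof -
  have "dotv w v = w $ None * v $ None + (\<Sum>j\<in>Some ` UNIV. w $ j * v $ j)"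
    unfolding dotv_def UNIV_option_conv by (rule sum.insert) auto
  thus ?thesis by (simp add: sum.reindex)
qed

lemma span_eq_UNIV_if_annihilator_trivial:
  fixes E :: "('a::field ^ 'm) set"
  assumes annihilator: "\<And>w. \<forall>v\<in>E. dotv w v = 0 \<Longrightarrow> w = 0"
  shows "vec.span E = UNIV"
proof (rule ccontr)
  assume "vec.span E \<noteq> UNIV"
  then obtain x where x: "x \<notin> vec.span E" by auto
  obtain B where B: "B \<subseteq> E" "vec.independent B" "E \<subseteq> vec.span B"
    by (rule vec.maximal_independent_subset)
  have "x \<notin> vec.span B" using x vec.span_mono[OF B(1)] by blast
  hence indep: "vec.independent (insert x B)" using B(2) by (rule vec.independent_insertI)
  \<comment> \<open>a linear map vanishing on span E but not at x; one of its coordinates is a form dotv w\<close>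
  define g :: "'a ^ 'm \<Rightarrow> 'a ^ 'm" where "g = vec.construct (insert x B) (\<lambda>v. if v = x then x else 0)"
  have lin: "Vector_Spaces.linear (*s) (*s) g"
    unfolding g_def using indep by (rule vec.linear_construct)
  have "x \<notin> B" using \<open>x \<notin> vec.span B\<close> vec.span_base by blast
  hence gx: "g x = x" and gB: "\<And>b. b \<in> B \<Longrightarrow> g b = 0"
    unfolding g_def using indep by (auto simp: vec.construct_basis)
  have "x \<noteq> 0" using x vec.span_zero by blast
  then obtain j where j: "x $ j \<noteq> 0" by (auto simp: vec_eq_iff)
  define w where "w = (\<chi> i. g (axis i 1) $ j)"
  have g_eq: "g v $ j = dotv w v" for v
  proof -
    have "g v $ j = (\<Sum>i\<in>UNIV. v $ i * g (axis i 1) $ j)" by (rule linear_componentwise[OF lin])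
    thus ?thesis unfolding dotv_def w_def by (simp add: mult.commute)
  qed
  have "\<forall>v\<in>E. dotv w v = 0"
  proof
    fix v assume "v \<in> E"
    hence "v \<in> vec.span B" using B(3) by blast
    hence "g v = 0" using vec.linear_eq_0_on_span[OF lin gB] by blast
    thus "dotv w v = 0" using g_eq[of v] by simp
  qed
  hence "w = 0" by (rule annihilator)
  thus False using g_eq[of x] gx j by (simp add: dotv_def)
qed

lemma absF_dotv_le_if_in_span:
  fixes E :: "('k::{field,finite} fls ^ 'm) set"
  assumes "u \<in> vec.span E" "u \<noteq> 0"
  shows "\<exists>\<Lambda>>0. \<forall>w. \<exists>v\<in>E. absF (dotv w u) \<le> \<Lambda> * absF (dotv w v)"
proof -
  obtain T r where T: "finite T" "T \<subseteq> E" and u: "u = (\<Sum>a\<in>T. r a *s a)"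
    using assms(1) unfolding vec.span_explicit by blast
  have "T \<noteq> {}" using u assms(2) by auto
  define \<Lambda> where "\<Lambda> = Max (insert 1 ((\<lambda>a. absF (r a)) ` T))"
  have r_le: "absF (r a) \<le> \<Lambda>" if "a \<in> T" for a
    unfolding \<Lambda>_def using T(1) that by (intro Max_ge) auto
  have "1 \<le> \<Lambda>" unfolding \<Lambda>_def using T(1) by (intro Max_ge) auto
  moreover have "\<exists>v\<in>E. absF (dotv w u) \<le> \<Lambda> * absF (dotv w v)" for w
  proof -
    obtain a where a: "a \<in> T" "absF (\<Sum>a\<in>T. r a * dotv w a) \<le> absF (r a * dotv w a)"
      using absF_sum_le_Max[OF T(1) \<open>T \<noteq> {}\<close>] by blast
    have "absF (dotv w u) \<le> absF (r a) * absF (dotv w a)"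
      using a(2) unfolding u dotv_sum_scale absF_mult .
    also have "\<dots> \<le> \<Lambda> * absF (dotv w a)"
      using r_le[OF a(1)] absF_nonneg by (rule mult_right_mono)
    finally show ?thesis using a(1) T(2) by blast
  qed
  ultimately show ?thesis by (intro exI[of _ \<Lambda>]) auto
qed

lemma normv_le_dotv_if_span_eq_UNIV:
  fixes E :: "('k::{field,finite} fls ^ 'm) set"
  assumes "vec.span E = UNIV"
  shows "\<exists>\<Lambda>>0. \<forall>w. \<exists>v\<in>E. normv w \<le> \<Lambda> * absF (dotv w v)"
proof -
  have "\<exists>\<Lambda>>0. \<forall>w. \<exists>v\<in>E. absF (w $ j) \<le> \<Lambda> * absF (dotv w v)" for j
    using absF_dotv_le_if_in_span[of "axis j 1" E] assms by (simp add: dotv_axis)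
  then obtain \<Lambda> where \<Lambda>: "\<And>j. \<Lambda> j > 0" "\<And>j w. \<exists>v\<in>E. absF (w $ j) \<le> \<Lambda> j * absF (dotv w v)"
    by metis
  define \<Lambda>\<^sub>0 where "\<Lambda>\<^sub>0 = Max (range \<Lambda>)"
  have \<Lambda>_le: "\<Lambda> j \<le> \<Lambda>\<^sub>0" for j unfolding \<Lambda>\<^sub>0_def by (intro Max_ge) auto
  have "\<exists>v\<in>E. normv w \<le> \<Lambda>\<^sub>0 * absF (dotv w v)" for w
  proof -
    obtain j where j: "normv w = absF (w $ j)" by (rule normv_attained)
    obtain v where "v \<in> E" "absF (w $ j) \<le> \<Lambda> j * absF (dotv w v)" using \<Lambda>(2) by blast
    moreover have "\<Lambda> j * absF (dotv w v) \<le> \<Lambda>\<^sub>0 * absF (dotv w v)"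
      using \<Lambda>_le absF_nonneg by (rule mult_right_mono)
    ultimately show ?thesis using j by (metis order_trans)
  qed
  moreover have "\<Lambda>\<^sub>0 > 0" using \<Lambda>(1)[of undefined] \<Lambda>_le[of undefined] by linarith
  ultimately show ?thesis by blast
qed

lemma absF_dotv_le: "absF (dotv a b :: 'k::{field,finite} fls) \<le> normv a * normv b"
proof -
  obtain i where "absF (dotv a b) \<le> absF (a $ i * b $ i)"
    using absF_sum_le_Max[of UNIV "\<lambda>i. a $ i * b $ i"] unfolding dotv_def by auto
  also have "\<dots> \<le> normv a * normv b"
    unfolding absF_mult using absF_le_normv absF_nonneg normv_nonneg by (intro mult_mono)
  finally show ?thesis .
qed

lemma affine_independent_imp_normv_le:
  fixes f :: "'x \<Rightarrow> 'k::{field,finite} fls ^ 'n"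
  assumes independent: "\<forall>c\<^sub>0 c. (\<forall>x\<in>V. c\<^sub>0 + dotv c (f x) = 0) \<longrightarrow> c\<^sub>0 = 0 \<and> c = 0"
  shows "\<exists>\<Lambda>>0. \<forall>a a\<^sub>0. \<exists>x\<in>V. normv a \<le> \<Lambda> * absF (a\<^sub>0 + dotv a (f x))"
proof -
  define lift :: "'k fls \<Rightarrow> 'k fls ^ 'n \<Rightarrow> 'k fls ^ 'n option" where
    "lift c\<^sub>0 c = (\<chi> j. case j of None \<Rightarrow> c\<^sub>0 | Some i \<Rightarrow> c $ i)" for c\<^sub>0 c
  have lift_nth [simp]: "lift c\<^sub>0 c $ None = c\<^sub>0" "lift c\<^sub>0 c $ Some i = c $ i" for c\<^sub>0 c i
    by (simp_all add: lift_def)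
  have dotv_lift: "dotv w (lift 1 (f x)) = w $ None + dotv (\<chi> i. w $ Some i) (f x)" for w x
    unfolding dotv_option by (simp add: dotv_def)
  have "vec.span (lift 1 ` f ` V) = UNIV"
  proof (rule span_eq_UNIV_if_annihilator_trivial)
    fix w assume "\<forall>v\<in>lift 1 ` f ` V. dotv w v = 0"
    hence "w $ None = 0 \<and> (\<chi> i. w $ Some i) = 0"
      using independent by (simp add: dotv_lift)
    thus "w = 0" by (simp add: vec_eq_iff) (metis option.exhaust)
  qed
  then obtain \<Lambda> where "\<Lambda> > 0" and \<Lambda>: "\<And>w. \<exists>v\<in>lift 1 ` f ` V. normv w \<le> \<Lambda> * absF (dotv w v)"
    using normv_le_dotv_if_span_eq_UNIV by blast
  have "\<exists>x\<in>V. normv a \<le> \<Lambda> * absF (a\<^sub>0 + dotv a (f x))" for a a\<^sub>0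
  proof -
    obtain x where "x \<in> V" and x: "normv (lift a\<^sub>0 a) \<le> \<Lambda> * absF (a\<^sub>0 + dotv a (f x))"
      using \<Lambda>[of "lift a\<^sub>0 a"] by (auto simp: dotv_lift)
    obtain i where "normv a = absF (a $ i)" by (rule normv_attained)
    also have "\<dots> \<le> normv (lift a\<^sub>0 a)" using absF_le_normv[of "lift a\<^sub>0 a" "Some i"] by simp
    also note x
    finally show ?thesis using \<open>x \<in> V\<close> by blast
  qed
  thus ?thesis using \<open>\<Lambda> > 0\<close> by blast
qed

lemma INF_SUP_absF_affine_add_pos:
  fixes f :: "'x \<Rightarrow> 'k::{field,finite} fls ^ 'n" and \<theta> :: "'x \<Rightarrow> 'k fls"
  assumes independent: "\<forall>c\<^sub>0 c. (\<forall>x\<in>V. c\<^sub>0 + dotv c (f x) = 0) \<longrightarrow> c\<^sub>0 = 0 \<and> c = 0"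
    and f_le: "\<forall>x\<in>V. normv (f x) \<le> 1" and \<theta>_le: "\<forall>x\<in>V. absF (\<theta> x) \<le> 1"
  shows "\<exists>M\<^sub>0>1. (INF p \<in> {(a, a\<^sub>0). normv a \<ge> M\<^sub>0}.
            SUP x\<in>V. absF (snd p + dotv (fst p) (f x) + \<theta> x)) > 0"
proof -
  obtain \<Lambda> where "\<Lambda> > 0" and \<Lambda>: "\<And>a a\<^sub>0. \<exists>x\<in>V. normv a \<le> \<Lambda> * absF (a\<^sub>0 + dotv a (f x))"
    using affine_independent_imp_normv_le[OF independent] by blast
  define M\<^sub>0 where "M\<^sub>0 = \<Lambda> + 1"
  let ?S = "{(a :: 'k fls ^ 'n, a\<^sub>0 :: 'k fls). normv a \<ge> M\<^sub>0}"
  have "1 \<le> (SUP x\<in>V. absF (a\<^sub>0 + dotv a (f x) + \<theta> x))" if "normv a \<ge> M\<^sub>0" for a a\<^sub>0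
  proof -
    obtain x where "x \<in> V" and x: "normv a \<le> \<Lambda> * absF (a\<^sub>0 + dotv a (f x))" using \<Lambda> by blast
    have "\<Lambda> * 1 < \<Lambda> * absF (a\<^sub>0 + dotv a (f x))" using x that unfolding M\<^sub>0_def by linarith
    hence gt1: "1 < absF (a\<^sub>0 + dotv a (f x))" using \<open>\<Lambda> > 0\<close> by simp
    have "absF (\<theta> x) < absF (a\<^sub>0 + dotv a (f x))" using \<theta>_le \<open>x \<in> V\<close> gt1 by fastforce
    hence "absF (a\<^sub>0 + dotv a (f x) + \<theta> x) = absF (a\<^sub>0 + dotv a (f x))" by (rule absF_add_eq_left)
    moreover have "bdd_above ((\<lambda>x. absF (a\<^sub>0 + dotv a (f x) + \<theta> x)) ` V)"
    proof (rule bdd_aboveI2)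
      fix y assume "y \<in> V"
      have "absF (a\<^sub>0 + dotv a (f y) + \<theta> y) \<le> max (max (absF a\<^sub>0) (absF (dotv a (f y)))) (absF (\<theta> y))"
        using absF_add_le[of "a\<^sub>0 + dotv a (f y)" "\<theta> y"] absF_add_le[of a\<^sub>0 "dotv a (f y)"] by linarith
      also have "\<dots> \<le> absF a\<^sub>0 + normv a + 1"
        using absF_dotv_le[of a "f y"] f_le \<theta>_le \<open>y \<in> V\<close> absF_nonneg[of a\<^sub>0] normv_nonneg[of a]
          mult_left_le[of "normv (f y)" "normv a"] by fastforce
      finally show "absF (a\<^sub>0 + dotv a (f y) + \<theta> y) \<le> absF a\<^sub>0 + normv a + 1" .
    qed
    ultimately show ?thesis using cSUP_upper[OF \<open>x \<in> V\<close>] gt1 by fastforce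
  qed
  moreover have "?S \<noteq> {}"
  proof -
    obtain y :: "'k fls" where "absF y > M\<^sub>0" using ex_absF_gt by blast
    hence "M\<^sub>0 < normv ((\<chi> i. y) :: 'k fls ^ 'n)"
      using absF_le_normv[of "(\<chi> i. y) :: 'k fls ^ 'n" undefined] by simp
    hence "((\<chi> i. y), 0) \<in> ?S" by simp
    thus ?thesis by blast
  qed
  ultimately have "1 \<le> (INF p \<in> ?S. SUP x\<in>V. absF (snd p + dotv (fst p) (f x) + \<theta> x))"
    by (intro cINF_greatest) auto
  moreover have "M\<^sub>0 > 1" unfolding M\<^sub>0_def using \<open>\<Lambda> > 0\<close> by simp
  ultimately show ?thesis by (intro exI[of _ M\<^sub>0]) auto
qed

theorem mainTheorem7:
  fixes U :: "(('k::{field,finite} fls) ^ 'd) set"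
    and x0 :: "('k fls) ^ 'd"
    and f :: "('k fls) ^ 'd \<Rightarrow> ('k fls) ^ 'n"
    and \<theta> :: "('k fls) ^ 'd \<Rightarrow> 'k fls"
    and i1 :: 'n and j1 :: 'd
  assumes U_open: "openF U" and x0U: "x0 \<in> U"
    \<comment> \<open>(II)\<close>
    and II_an: "\<forall>i. analyticF U (\<lambda>x. f x $ i) \<and> analytic_to_boundary U (\<lambda>x. f x $ i)"
    and II_f1: "\<forall>x\<in>U. f x $ i1 = x $ j1"
    \<comment> \<open>(III)\<close>
    and III: "\<forall>W. openF W \<and> W \<noteq> {} \<and> W \<subseteq> U \<longrightarrow>
               (\<forall>c0 (c :: ('k fls) ^ 'n). (\<forall>x\<in>W. c0 + (\<Sum>i\<in>UNIV. c $ i * f x $ i) = 0) \<longrightarrow> c0 = 0 \<and> c = 0)"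
    \<comment> \<open>(IV)\<close>
    and IV_f: "\<forall>x\<in>U. normv (f x) \<le> 1"
    and IV_grad: "\<forall>x\<in>U. \<forall>i j. \<exists>D. has_partialF (\<lambda>y. f y $ i) j x D \<and> absF D \<le> 1"
    and IV_dq: "\<forall>\<beta>. (\<Sum>i\<in>UNIV. \<beta> i) = 2 \<longrightarrow> (\<forall>i. dq_bar_bounded U \<beta> (\<lambda>y. f y $ i))"
    \<comment> \<open>(VI)\<close>
    and VI_an: "analyticF U \<theta> \<and> analytic_to_boundary U \<theta>"
    and VI_th: "\<forall>x\<in>U. absF (\<theta> x) \<le> 1"
    and VI_grad: "\<forall>x\<in>U. \<forall>j. \<exists>D. has_partialF \<theta> j x D \<and> absF D \<le> 1"
    and VI_dq: "\<forall>\<beta>. (\<Sum>i\<in>UNIV. \<beta> i) = 2 \<longrightarrow> dq_bar_bounded U \<beta> \<theta>"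
  shows "\<exists>W. openF W \<and> x0 \<in> W \<and> W \<subseteq> U \<and>
           (\<forall>V. openF V \<and> x0 \<in> V \<and> V \<subseteq> W \<longrightarrow>
              (\<exists>M0>1. (INF p \<in> {(a :: ('k fls) ^ 'n, a0 :: 'k fls). normv a \<ge> M0}.
                         (SUP x\<in>V. absF (snd p + (\<Sum>i\<in>UNIV. fst p $ i * f x $ i) + \<theta> x))) > 0))"
proof -
  \<comment> \<open>W = U works, and only (III) and the sup bounds of (IV) and (VI) are needed\<close>
  have "\<exists>M\<^sub>0>1. (INF p \<in> {(a :: ('k fls) ^ 'n, a\<^sub>0 :: 'k fls). normv a \<ge> M\<^sub>0}.
                 (SUP x\<in>V. absF (snd p + (\<Sum>i\<in>UNIV. fst p $ i * f x $ i) + \<theta> x))) > 0"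
    if V: "openF V \<and> x0 \<in> V \<and> V \<subseteq> U" for V
  proof -
    have "\<forall>c\<^sub>0 c. (\<forall>x\<in>V. c\<^sub>0 + dotv c (f x) = 0) \<longrightarrow> c\<^sub>0 = 0 \<and> c = 0"
      using III V unfolding dotv_def by blast
    moreover have "\<forall>x\<in>V. normv (f x) \<le> 1" "\<forall>x\<in>V. absF (\<theta> x) \<le> 1"
      using IV_f VI_th V by auto
    ultimately show ?thesis
      using INF_SUP_absF_affine_add_pos[of V f \<theta>] unfolding dotv_def by blast
  qed
  thus ?thesis using U_open x0U by blast
qed

end
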